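(* If $Q$ is a Jordan loop, $x\in Q$ and $n\ge 0$ is an integer with binary expansion $n=\sum_{i=0}^k a_i2^i$ ($a_i\in\{0,1\}$), then $x^{n}=x^{1\cdot a_0}\bigl(x^{2\cdot a_1}\bigl(\cdots\bigl(x^{2^{k-1}\cdot a_{k-1}}\, x^{2^k\cdot a_k}\bigr)\cdots\bigr)\bigr).$
   Context: A loop is a set $Q$ with a binary operation (juxtaposition) and neutral element $e$ such that for all $a,b$ the equations $ax=b$, $ya=b$ have unique solutions. A Jordan loop is a commutative loop satisfying $x^2(yx)=(x^2y)x$. For $k\ge 0$, $x^k$ denotes the right-associated product $x(x(\cdots(xe)\cdots))$ with $k$ factors $x$; in particular $x^0=e$. *)

theory Defs
  imports Main
begin

definition loop :: "'a set \<Rightarrow> ('a \<Rightarrow> 'a \<Rightarrow> 'a) \<Rightarrow> 'a \<Rightarrow> bool" where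
  "loop Q m e \<longleftrightarrow>
     e \<in> Q \<and> (\<forall>a\<in>Q. \<forall>b\<in>Q. m a b \<in> Q) \<and>
     (\<forall>a\<in>Q. m e a = a \<and> m a e = a) \<and>
     (\<forall>a\<in>Q. \<forall>b\<in>Q. \<exists>!x. x \<in> Q \<and> m a x = b) \<and>
     (\<forall>a\<in>Q. \<forall>b\<in>Q. \<exists>!y. y \<in> Q \<and> m y a = b)"

fun lpow :: "('a \<Rightarrow> 'a \<Rightarrow> 'a) \<Rightarrow> 'a \<Rightarrow> 'a \<Rightarrow> nat \<Rightarrow> 'a" where
  "lpow m e x 0 = e"
| "lpow m e x (Suc k) = m x (lpow m e x k)"

definition jordan_loop :: "'a set \<Rightarrow> ('a \<Rightarrow> 'a \<Rightarrow> 'a) \<Rightarrow> 'a \<Rightarrow> bool" where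
  "jordan_loop Q m e \<longleftrightarrow> loop Q m e \<and>
     (\<forall>a\<in>Q. \<forall>b\<in>Q. m a b = m b a) \<and>
     (\<forall>x\<in>Q. \<forall>y\<in>Q. m (lpow m e x 2) (m y x) = m (m (lpow m e x 2) y) x)"

fun rnest :: "('a \<Rightarrow> 'a \<Rightarrow> 'a) \<Rightarrow> 'a \<Rightarrow> 'a list \<Rightarrow> 'a" where
  "rnest m e [] = e"
| "rnest m e [t] = t"
| "rnest m e (t # u # ts) = m t (rnest m e (u # ts))"

end

theory Submission
  imports Defs
begin

text \<open>The Jordan identity with y = x^n gives x^2 x^(n+1) = (x^2 x^n) x, so multiplication by x^2
  acts on the powers of x as a shift by 2. Consequently (x^2)^t = x^(2t), and the nested product
  is evaluated from the inside out by induction on the number of binary digits: peeling off the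
  lowest digit a_0 leaves the same nested product for x^2 and the digits a_1, a_2, ..., whose value
  is (x^2)^(n div 2) = x^(2 (n div 2)); multiplying by x^(a_0) \<in> {e, x} then yields x^n.\<close>

lemma lpow_closed: "loop Q m e \<Longrightarrow> x \<in> Q \<Longrightarrow> lpow m e x n \<in> Q"
  by (induction n) (auto simp: loop_def)

lemma lpow_one: "loop Q m e \<Longrightarrow> x \<in> Q \<Longrightarrow> lpow m e x 1 = x"
  by (simp add: loop_def)

lemma lpow_square_mult:
  assumes J: "jordan_loop Q m e" and x: "x \<in> Q"
  shows "m (lpow m e x 2) (lpow m e x n) = lpow m e x (n + 2)"
proof (induction n)
  case 0
  have L: "loop Q m e" using J by (simp add: jordan_loop_def)
  have "m (lpow m e x 2) e = lpow m e x 2"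
    using L lpow_closed[OF L x, of 2] unfolding loop_def by blast
  then show ?case by (simp add: numeral_2_eq_2)
next
  case (Suc n)
  have L: "loop Q m e" and comm: "\<And>a b. a \<in> Q \<Longrightarrow> b \<in> Q \<Longrightarrow> m a b = m b a"
    and jordan: "\<And>y. y \<in> Q \<Longrightarrow> m (lpow m e x 2) (m y x) = m (m (lpow m e x 2) y) x"
    using J x by (auto simp: jordan_loop_def)
  have "m (lpow m e x 2) (lpow m e x (Suc n)) = m (lpow m e x 2) (m (lpow m e x n) x)"
    using comm[OF x lpow_closed[OF L x, of n]] by (simp only: lpow.simps(2))
  also have "\<dots> = m (lpow m e x (n + 2)) x"
    using jordan[OF lpow_closed[OF L x, of n]] Suc.IH by (simp only:)
  also have "\<dots> = lpow m e x (Suc n + 2)"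
    using comm[OF lpow_closed[OF L x, of "n + 2"] x] by (simp only: add_Suc lpow.simps(2))
  finally show ?case .
qed

lemma lpow_lpow_square:
  assumes "jordan_loop Q m e" and "x \<in> Q"
  shows "lpow m e (lpow m e x 2) t = lpow m e x (2 * t)"
  by (induction t) (simp_all add: lpow_square_mult[OF assms] add.commute)

lemma lpow_bit_mult:
  assumes L: "loop Q m e" and x: "x \<in> Q" and b: "b \<in> {0, 1}"
  shows "m (lpow m e x b) (lpow m e x n) = lpow m e x (b + n)"
  using b lpow_closed[OF L x, of n] lpow_one[OF L x] L by (auto simp: loop_def)

lemma rnest_Cons: "ts \<noteq> [] \<Longrightarrow> rnest m e (t # ts) = m t (rnest m e ts)"
  by (cases ts) simp_all

lemma rnest_binary_powers:
  assumes J: "jordan_loop Q m e"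
  shows "x \<in> Q \<Longrightarrow> \<forall>i\<le>k. a i \<in> {0, 1} \<Longrightarrow>
    rnest m e (map (\<lambda>i. lpow m e x (2 ^ i * a i)) [0..<Suc k]) = lpow m e x (\<Sum>i\<le>k. a i * 2 ^ i)"
proof (induction k arbitrary: x a)
  case 0
  then show ?case by (simp add: mult.commute)
next
  case (Suc k)
  have L: "loop Q m e" using J by (simp add: jordan_loop_def)
  define S where "S = (\<Sum>i\<le>k. a (Suc i) * 2 ^ i)"
  have digits_sum: "(\<Sum>i\<le>Suc k. a i * 2 ^ i) = a 0 + 2 * S"
    unfolding S_def sum.atMost_Suc_shift by (simp add: sum_distrib_left algebra_simps)
  have higher_digits: "rnest m e (map (\<lambda>i. lpow m e x (2 ^ Suc i * a (Suc i))) [0..<Suc k])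
      = lpow m e x (2 * S)"
  proof -
    have "rnest m e (map (\<lambda>i. lpow m e x (2 ^ Suc i * a (Suc i))) [0..<Suc k])
        = rnest m e (map (\<lambda>i. lpow m e (lpow m e x 2) (2 ^ i * a (Suc i))) [0..<Suc k])"
      by (simp add: lpow_lpow_square[OF J Suc.prems(1)] mult.assoc)
    also have "\<dots> = lpow m e (lpow m e x 2) S"
      unfolding S_def using Suc.IH[of "lpow m e x 2" "a \<circ> Suc"] Suc.prems lpow_closed[OF L]
      by simp
    finally show ?thesis by (simp add: lpow_lpow_square[OF J Suc.prems(1)])
  qed
  have "[0..<Suc (Suc k)] = 0 # map Suc [0..<Suc k]"
    by (simp add: map_Suc_upt upt_conv_Cons del: upt_Suc)
  then have "rnest m e (map (\<lambda>i. lpow m e x (2 ^ i * a i)) [0..<Suc (Suc k)])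
      = m (lpow m e x (a 0)) (lpow m e x (2 * S))"
    using higher_digits by (simp add: rnest_Cons comp_def del: upt_Suc)
  also have "\<dots> = lpow m e x (\<Sum>i\<le>Suc k. a i * 2 ^ i)"
    using lpow_bit_mult[OF L Suc.prems(1)] Suc.prems(2) digits_sum by simp
  finally show ?case .
qed

theorem corollary2p3:
  fixes Q :: "'a set" and m :: "'a \<Rightarrow> 'a \<Rightarrow> 'a" and e x :: 'a
    and n k :: nat and a :: "nat \<Rightarrow> nat"
  assumes "jordan_loop Q m e"
    and "x \<in> Q"
    and "\<forall>i\<le>k. a i \<in> {0, 1}"
    and "n = (\<Sum>i\<le>k. a i * 2 ^ i)"
  shows "lpow m e x n = rnest m e (map (\<lambda>i. lpow m e x (2 ^ i * a i)) [0..<Suc k])"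
  using rnest_binary_powers[OF assms(1-3)] assms(4) by simp

end
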